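(* Consider a classification task in which the unlabeled graph $\overline G$ has support $\overline{\mathcal G}$ equal to all graphs on $n\in\mathbb N$ vertices, the edges of $\overline G$ are jointly independent, and $\mathbf X\in\mathcal Z^{n\times d}$ for a finite set $\mathcal Z$. Fix a subgraph $g_{exp}$ and let the label be $Y=\mathds 1(g_{exp}\subseteq\overline G)$ (a deterministic task). Let $f(\overline G)$ be the classifier that outputs label $\mathds 1(g_{exp}\subseteq\overline G)$ with probability one. For $p\in[0,1]$, let $\Psi_p$ be the (stochastic) explanation function with $P(\Psi_p(\overline g)=g_{exp}\mid g_{exp}\subseteq\overline g)=p$ and $P(\Psi_p(\overline g)=\phi\mid g_{exp}\subseteq\overline g)=1-p$, where $\phi$ is the empty graph, and let $\mathcal S=\{\Psi_p:p\in[0,1]\}$. Then the fidelity measure $Fid_\Delta$ is well-behaved for $\{f\}$ and $\mathcal S$.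
   Context: Graph data: a random labeled graph $G=(\mathcal V,\mathcal E;Y,\mathbf X,\mathbf A)$ with unlabeled version $\overline G$. A classifier $f$ maps an unlabeled graph to a distribution on labels; $\widehat Y\sim f(\overline G)$. An explanation function $\Psi$ maps $\overline G$ to a subgraph $\Psi(\overline G)$ of it. For an explanation function $\Psi$, $$I(\widehat Y;\overline G\mid\mathds 1_{\Psi(\overline G)})\triangleq\sum_{g'}P_{\Psi(\overline G)}(g')\sum_{y,\overline g}P_{\widehat Y,\overline G}(y,\overline g|g'\subseteq\overline G)\log\frac{P_{\widehat Y,\overline G}(y,\overline g|g'\subseteq\overline G)}{P_{\widehat Y}(y|g'\subseteq\overline G)P_{\overline G}(\overline g|g'\subseteq\overline G)}.$$ Fidelity measures: let $\widehat P(\cdot)$ be the distribution $f(\overline G)$, $\widehat P^+(\cdot)$ the distribution $f(\overline G-\Psi(\overline G))$ where $\overline G-\Psi(\overline G)$ is the subgraph with edge set $\mathcal E\setminus\mathcal E_{exp}$, and $\widehat P^-(\cdot)$ the distribution $f(\Psi(\overline G))$. Define $Fid_+=\mathbb E[\widehat P(Y)-\widehat P^+(Y)]$, $Fid_-=\mathbb E[\widehat P(Y)-\widehat P^-(Y)]$, $Fid_\Delta=Fid_+-Fid_-$ (expectation over $(\overline G,Y)$ and randomness of $\Psi$). A fidelity measure $Fid(f,\Psi)$ is well-behaved for a set of classifiers $\mathcal F$ and explanation functions $\mathcal S$ if for all $f\in\mathcal F$ and $\Psi_1,\Psi_2\in\mathcal S$: $I(\widehat Y;\overline G|\mathds 1_{\Psi_1(\overline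 G)})\le I(\widehat Y;\overline G|\mathds 1_{\Psi_2(\overline G)})$ if and only if $Fid(f,\Psi_2)\le Fid(f,\Psi_1)$. *)

theory Defs
  imports "HOL-Probability.Probability"
begin

text \<open>An (unlabeled) graph whose vertices are natural numbers: a set of undirected edges,
  each edge (i,j) stored with i < j, together with a partial feature map assigning to each
  vertex of the graph its feature row (a list of length d).  The vertex set is dom X.\<close>
type_synonym 'z graph = "(nat \<times> nat) set \<times> (nat \<Rightarrow> 'z list option)"

definition edges :: "'z graph \<Rightarrow> (nat \<times> nat) set" where
  "edges g = fst g"

definition feats :: "'z graph \<Rightarrow> (nat \<Rightarrow> 'z list option)" where
  "feats g = snd g"

definition graphs_on :: "nat \<Rightarrow> nat \<Rightarrow> 'z set \<Rightarrow> 'z graph set" where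
  "graphs_on n d Z = {g. edges g \<subseteq> {(i,j). i < j \<and> j < n} \<and> dom (feats g) = {..<n} \<and>
      (\<forall>v xs. feats g v = Some xs \<longrightarrow> length xs = d \<and> set xs \<subseteq> Z)}"

definition pot_edges :: "nat \<Rightarrow> (nat \<times> nat) set" where
  "pot_edges n = {(i,j). i < j \<and> j < n}"

definition subgraph :: "'z graph \<Rightarrow> 'z graph \<Rightarrow> bool" where
  "subgraph g' g \<longleftrightarrow> edges g' \<subseteq> edges g \<and> feats g' \<subseteq>\<^sub>m feats g"

definition empty_graph :: "'z graph" where
  "empty_graph = ({}, Map.empty)"

definition graph_minus :: "'z graph \<Rightarrow> 'z graph \<Rightarrow> 'z graph" where
  "graph_minus g s = (edges g - edges s, feats g)"

definition mutual_info :: "('a \<times> 'b) pmf \<Rightarrow> real" where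
  "mutual_info P = (\<Sum>(a,b)\<in>set_pmf P. pmf P (a,b) *
      log 2 (pmf P (a,b) / (pmf (map_pmf fst P) a * pmf (map_pmf snd P) b)))"

text \<open>Classifiers map an unlabeled graph to a distribution over labels (bool, True = label 1);
  explanation functions map an unlabeled graph to a distribution over (its) subgraphs.
  D is the joint distribution of (unlabeled graph, label).\<close>

definition pred_joint :: "('z graph \<times> bool) pmf \<Rightarrow> ('z graph \<Rightarrow> bool pmf) \<Rightarrow> (bool \<times> 'z graph) pmf" where
  "pred_joint D f = map_pmf fst D \<bind> (\<lambda>g. map_pmf (\<lambda>y. (y, g)) (f g))"

text \<open>I(Yhat; Gbar | 1_{Psi(Gbar)}).\<close>
definition cond_MI_expl ::
  "('z graph \<times> bool) pmf \<Rightarrow> ('z graph \<Rightarrow> bool pmf) \<Rightarrow> ('z graph \<Rightarrow> 'z graph pmf) \<Rightarrow> real" where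
  "cond_MI_expl D f \<Psi> =
    (let PPsi = map_pmf fst D \<bind> \<Psi>; J = pred_joint D f in
     \<Sum>g'\<in>set_pmf PPsi. pmf PPsi g' * mutual_info (cond_pmf J {(y, g). subgraph g' g}))"

definition Fid_plus ::
  "('z graph \<times> bool) pmf \<Rightarrow> ('z graph \<Rightarrow> bool pmf) \<Rightarrow> ('z graph \<Rightarrow> 'z graph pmf) \<Rightarrow> real" where
  "Fid_plus D f \<Psi> = measure_pmf.expectation D (\<lambda>(g, y).
      measure_pmf.expectation (\<Psi> g) (\<lambda>s. pmf (f g) y - pmf (f (graph_minus g s)) y))"

definition Fid_minus ::
  "('z graph \<times> bool) pmf \<Rightarrow> ('z graph \<Rightarrow> bool pmf) \<Rightarrow> ('z graph \<Rightarrow> 'z graph pmf) \<Rightarrow> real" where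
  "Fid_minus D f \<Psi> = measure_pmf.expectation D (\<lambda>(g, y).
      measure_pmf.expectation (\<Psi> g) (\<lambda>s. pmf (f g) y - pmf (f s) y))"

definition Fid_Delta ::
  "('z graph \<times> bool) pmf \<Rightarrow> ('z graph \<Rightarrow> bool pmf) \<Rightarrow> ('z graph \<Rightarrow> 'z graph pmf) \<Rightarrow> real" where
  "Fid_Delta D f \<Psi> = Fid_plus D f \<Psi> - Fid_minus D f \<Psi>"

definition well_behaved ::
  "(('z graph \<Rightarrow> bool pmf) \<Rightarrow> ('z graph \<Rightarrow> 'z graph pmf) \<Rightarrow> real) \<Rightarrow> ('z graph \<times> bool) pmf \<Rightarrow>
   ('z graph \<Rightarrow> bool pmf) set \<Rightarrow> ('z graph \<Rightarrow> 'z graph pmf) set \<Rightarrow> bool" where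
  "well_behaved Fid D F S \<longleftrightarrow>
    (\<forall>f\<in>F. \<forall>\<Psi>1\<in>S. \<forall>\<Psi>2\<in>S.
       cond_MI_expl D f \<Psi>1 \<le> cond_MI_expl D f \<Psi>2 \<longleftrightarrow> Fid f \<Psi>2 \<le> Fid f \<Psi>1)"

text \<open>The stochastic explanation function Psi_p: on graphs containing g_exp it returns g_exp
  with probability p and the empty graph with probability 1-p; on the remaining graphs it
  follows a fixed kernel K (the same for every p).\<close>
definition Psi_p :: "'z graph \<Rightarrow> ('z graph \<Rightarrow> 'z graph pmf) \<Rightarrow> real \<Rightarrow> 'z graph \<Rightarrow> 'z graph pmf" where
  "Psi_p gexp K p g = (if subgraph gexp g
      then map_pmf (\<lambda>b. if b then gexp else empty_graph) (bernoulli_pmf p) else K g)"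

end

theory Submission
  imports Defs
begin

text \<open>Conditioning on \<open>gexp \<subseteq> G\<close> makes the predicted label constant, so that term of the
  conditional mutual information vanishes, whereas conditioning on the empty graph conditions on
  nothing and leaves \<open>I(Y; G) = H(Y)\<close>.  This is positive: the edgeless graph lies in the
  support and does not contain \<open>gexp\<close>.  With \<open>q = P(gexp \<subseteq> G)\<close> the information is thus
  \<open>(1 - p) q H(Y) + C\<close>, strictly decreasing in \<open>p\<close> when \<open>q > 0\<close>, whereas
  \<open>Fid\<^sub>\<Delta> = (2p - 1) q\<close> increases; for \<open>q = 0\<close> both are constant.\<close>

lemma subgraph_refl [simp]: "subgraph g g"
  by (simp add: subgraph_def)

lemma subgraph_trans: "subgraph g h \<Longrightarrow> subgraph h k \<Longrightarrow> subgraph g k"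
  by (auto simp: subgraph_def intro: map_le_trans)

lemma subgraph_empty_graph [simp]: "subgraph empty_graph g"
  by (simp add: subgraph_def empty_graph_def edges_def feats_def)

lemma not_subgraph_empty_graph: "edges g \<noteq> {} \<Longrightarrow> \<not> subgraph g empty_graph"
  by (simp add: subgraph_def empty_graph_def edges_def feats_def)

lemma not_subgraph_graph_minus_self: "edges s \<noteq> {} \<Longrightarrow> \<not> subgraph s (graph_minus g s)"
  by (auto simp: subgraph_def graph_minus_def edges_def feats_def)

lemma subgraph_graph_minusD: "subgraph h (graph_minus g s) \<Longrightarrow> subgraph h g"
  by (auto simp: subgraph_def graph_minus_def edges_def feats_def)

lemma finite_map_le: "finite (dom f) \<Longrightarrow> finite {m. m \<subseteq>\<^sub>m f}"
proof -
  have "{m. m \<subseteq>\<^sub>m f} \<subseteq> (\<lambda>D. f |` D) ` Pow (dom f)"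
  proof
    fix m assume "m \<in> {m. m \<subseteq>\<^sub>m f}"
    hence "m = f |` dom m" "dom m \<subseteq> dom f"
      by (auto simp: map_le_def restrict_map_def fun_eq_iff dom_def)
    thus "m \<in> (\<lambda>D. f |` D) ` Pow (dom f)" by blast
  qed
  thus "finite (dom f) \<Longrightarrow> ?thesis" by (rule finite_subset) simp
qed

lemma finite_subgraphs:
  assumes "finite (edges g)" "finite (dom (feats g))"
  shows "finite {s. subgraph s g}"
proof (rule finite_subset)
  show "{s. subgraph s g} \<subseteq> Pow (edges g) \<times> {m. m \<subseteq>\<^sub>m feats g}"
    by (auto simp: subgraph_def edges_def feats_def)
qed (use assms finite_map_le in auto)

lemma finite_pot_edges: "finite (pot_edges n)"
  by (rule finite_subset[of _ "{..<n} \<times> {..<n}"]) (auto simp: pot_edges_def)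

lemma finite_subgraphs_graphs_on:
  assumes "g \<in> graphs_on n d Z"
  shows "finite {s. subgraph s g}"
proof (rule finite_subgraphs)
  have "edges g \<subseteq> pot_edges n" using assms by (auto simp: graphs_on_def pot_edges_def)
  thus "finite (edges g)" using finite_pot_edges finite_subset by blast
  show "finite (dom (feats g))" using assms by (simp add: graphs_on_def)
qed

lemma finite_graphs_on:
  assumes "finite Z"
  shows "finite (graphs_on n d Z)"
proof (rule finite_subset)
  let ?rows = "{xs. set xs \<subseteq> Z \<and> length xs = d}"
  show "graphs_on n d Z \<subseteq> Pow (pot_edges n) \<times> {m. dom m = {..<n} \<and> ran m \<subseteq> ?rows}"
    by (force simp: graphs_on_def pot_edges_def edges_def feats_def ran_def)
  show "finite (Pow (pot_edges n) \<times> {m. dom m = {..<n} \<and> ran m \<subseteq> ?rows})"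
    using finite_pot_edges finite_lists_length_eq[OF assms]
    by (intro finite_cartesian_product finite_set_of_finite_maps) auto
qed

lemma edgeless_in_graphs_on: "g \<in> graphs_on n d Z \<Longrightarrow> ({}, feats g) \<in> graphs_on n d Z"
  by (auto simp: graphs_on_def edges_def feats_def)

lemma cond_pmf_UNIV: "cond_pmf p UNIV = p"
proof (rule pmf_eqI)
  fix x
  have "set_pmf p \<inter> UNIV \<noteq> {}" using set_pmf_not_empty by auto
  thus "pmf (cond_pmf p UNIV) x = pmf p x" by (simp add: pmf_cond measure_pmf.prob_space)
qed

lemma pmf_integral_cong:
  fixes f g :: "'a \<Rightarrow> real"
  shows "(\<And>x. x \<in> set_pmf M \<Longrightarrow> f x = g x) \<Longrightarrow>
    measure_pmf.expectation M f = measure_pmf.expectation M g"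
  by (auto intro!: integral_cong_AE simp: AE_measure_pmf_iff)

lemma expectation_bind_pmf_finite:
  fixes h :: "'b \<Rightarrow> real"
  assumes fin: "finite (set_pmf N)" and "finite B"
    and sub: "\<And>x. x \<in> set_pmf N \<Longrightarrow> set_pmf (F x) \<subseteq> B"
  shows "measure_pmf.expectation (bind_pmf N F) h =
         measure_pmf.expectation N (\<lambda>x. measure_pmf.expectation (F x) h)"
proof -
  have inner: "measure_pmf.expectation (F x) h = (\<Sum>b\<in>B. h b * pmf (F x) b)"
    if "x \<in> set_pmf N" for x
    by (rule integral_measure_pmf_real) (use \<open>finite B\<close> sub that in auto)
  have "measure_pmf.expectation (bind_pmf N F) h = (\<Sum>b\<in>B. h b * pmf (bind_pmf N F) b)"
    by (rule integral_measure_pmf_real) (use \<open>finite B\<close> sub in auto)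
  also have "\<dots> = (\<Sum>b\<in>B. h b * (\<Sum>x\<in>set_pmf N. pmf (F x) b * pmf N x))"
    by (intro sum.cong refl arg_cong2[where f="(*)"], simp only: pmf_bind,
        rule integral_measure_pmf_real) (use fin in auto)
  also have "\<dots> = (\<Sum>x\<in>set_pmf N. (\<Sum>b\<in>B. h b * pmf (F x) b) * pmf N x)"
    by (simp add: sum_distrib_left sum_distrib_right mult_ac sum.swap[of _ B])
  also have "\<dots> = (\<Sum>x\<in>set_pmf N. measure_pmf.expectation (F x) h * pmf N x)"
    using inner by simp
  also have "\<dots> = measure_pmf.expectation N (\<lambda>x. measure_pmf.expectation (F x) h)"
    by (rule integral_measure_pmf_real[symmetric]) (use fin in auto)
  finally show ?thesis .
qed

lemma mutual_info_const_fst: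
  assumes "\<And>x. x \<in> set_pmf P \<Longrightarrow> fst x = a"
  shows "mutual_info P = 0"
  unfolding mutual_info_def
proof (rule sum.neutral, safe)
  fix a' b assume ab: "(a', b) \<in> set_pmf P"
  have P: "P = map_pmf (Pair a) (map_pmf snd P)"
    using assms by (simp add: map_pmf_comp map_pmf_idI prod_eq_iff)
  have "map_pmf fst P = return_pmf a"
    using assms by (subst set_pmf_subset_singleton[symmetric]) auto
  moreover have "pmf P (a, b) = pmf (map_pmf snd P) b"
    by (subst P) (rule pmf_map_inj', simp add: inj_def)
  moreover have "b \<in> set_pmf (map_pmf snd P)"
    using ab by force
  hence "pmf (map_pmf snd P) b > 0" by (simp add: pmf_positive)
  ultimately show "pmf P (a', b) * log 2 (pmf P (a', b) /
      (pmf (map_pmf fst P) a' * pmf (map_pmf snd P) b)) = 0"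
    using assms[OF ab] by simp
qed

text \<open>The probability factor covers the null event, on which \<open>cond_pmf\<close> is unspecified.\<close>

lemma prob_mult_mutual_info_cond_label_true:
  fixes c :: "'a \<Rightarrow> bool"
  shows "measure_pmf.prob D {g. c g} *
    mutual_info (cond_pmf (map_pmf (\<lambda>g. (c g, g)) D) {(y, g). c g}) = 0"
proof (cases "measure_pmf.prob D {g. c g} = 0")
  case False
  hence "set_pmf (map_pmf (\<lambda>g. (c g, g)) D) \<inter> {(y, g). c g} \<noteq> {}"
    by (auto simp: measure_pmf_zero_iff)
  hence "mutual_info (cond_pmf (map_pmf (\<lambda>g. (c g, g)) D) {(y, g). c g}) = 0"
    by (intro mutual_info_const_fst[where a=True]) auto
  thus ?thesis by simp
qed simp

lemma mutual_info_label_pos: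
  fixes c :: "'a \<Rightarrow> 'b"
  assumes fin: "finite (set_pmf D)"
    and nonconst: "\<And>g. g \<in> set_pmf D \<Longrightarrow> measure_pmf.prob D {x. c x = c g} < 1"
  shows "mutual_info (map_pmf (\<lambda>g. (c g, g)) D) > 0"
proof -
  define J where "J = map_pmf (\<lambda>g. (c g, g)) D"
  show ?thesis unfolding J_def[symmetric] mutual_info_def
  proof (rule sum_pos)
    show "finite (set_pmf J)" using fin by (simp add: J_def)
    show "set_pmf J \<noteq> {}" by (rule set_pmf_not_empty)
    fix x assume "x \<in> set_pmf J"
    then obtain g where g: "g \<in> set_pmf D" and x: "x = (c g, g)" by (auto simp: J_def)
    define Q where "Q = measure_pmf.prob D {y. c y = c g}"
    have pJ: "pmf J (c g, g) = pmf D g"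
      unfolding J_def by (rule pmf_map_inj') (auto simp: inj_def)
    have pF: "pmf (map_pmf fst J) (c g) = Q"
      by (simp add: J_def Q_def map_pmf_comp pmf_map vimage_def)
    have pS: "map_pmf snd J = D" by (simp add: J_def map_pmf_comp)
    have pg: "pmf D g > 0" using g by (simp add: pmf_positive)
    have "pmf D g \<le> Q" unfolding Q_def measure_pmf_single[symmetric]
      by (rule measure_pmf.finite_measure_mono) auto
    moreover have "Q < 1" using nonconst g by (simp add: Q_def)
    \<comment> \<open>the summand at \<open>(c g, g)\<close> is \<open>P(g) log (1 / P(c = c g))\<close>\<close>
    ultimately have "log 2 (pmf D g / (Q * pmf D g)) > 0" using pg by simp
    thus "(case x of (a, b) \<Rightarrow> pmf J (a, b) *
        log 2 (pmf J (a, b) / (pmf (map_pmf fst J) a * pmf (map_pmf snd J) b))) > 0"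
      using pg by (simp add: x pJ pF pS)
  qed
qed

lemma pred_joint_deterministic:
  "pred_joint (map_pmf (\<lambda>g. (g, c g)) D) (\<lambda>g. return_pmf (c g)) = map_pmf (\<lambda>g. (c g, g)) D"
  by (simp add: pred_joint_def map_pmf_comp map_pmf_def[of "\<lambda>g. (c g, g)"])

lemma cond_MI_expl_eq_expectation:
  assumes "finite (set_pmf (map_pmf fst D))" "finite B"
    and "\<And>g. g \<in> set_pmf (map_pmf fst D) \<Longrightarrow> set_pmf (\<Psi> g) \<subseteq> B"
  shows "cond_MI_expl D f \<Psi> = measure_pmf.expectation (map_pmf fst D) (\<lambda>g.
    measure_pmf.expectation (\<Psi> g) (\<lambda>g'. mutual_info (cond_pmf (pred_joint D f) {(y, g). subgraph g' g})))"
proof -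
  let ?M = "\<lambda>g'. mutual_info (cond_pmf (pred_joint D f) {(y, g). subgraph g' g})"
  define P where "P = map_pmf fst D \<bind> \<Psi>"
  have "set_pmf P \<subseteq> B" unfolding P_def set_bind_pmf using assms(3) by blast
  hence "finite (set_pmf P)" using assms(2) by (rule finite_subset)
  hence "cond_MI_expl D f \<Psi> = measure_pmf.expectation P ?M"
    unfolding cond_MI_expl_def Let_def P_def[symmetric]
    by (subst integral_measure_pmf_real[of "set_pmf P"]) (auto simp: mult.commute)
  also have "\<dots> = measure_pmf.expectation (map_pmf fst D) (\<lambda>g. measure_pmf.expectation (\<Psi> g) ?M)"
    unfolding P_def by (rule expectation_bind_pmf_finite[OF assms])
  finally show ?thesis .
qed

lemma mutual_info_bool_label_pos:
  fixes c :: "'a \<Rightarrow> bool"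
  assumes "finite (set_pmf D)" "0 < measure_pmf.prob D {g. c g}" "measure_pmf.prob D {g. c g} < 1"
  shows "mutual_info (map_pmf (\<lambda>g. (c g, g)) D) > 0"
proof (rule mutual_info_label_pos[OF assms(1)])
  fix g
  have "{x. c x = c g} = (if c g then {g. c g} else UNIV - {g. c g})" by auto
  moreover have "measure_pmf.prob D (UNIV - {g. c g}) = 1 - measure_pmf.prob D {g. c g}"
    using measure_pmf.prob_compl[of "{g. c g}" D] by simp
  ultimately show "measure_pmf.prob D {x. c x = c g} < 1"
    using assms(2,3) by simp
qed

lemma Fid_plus_Psi_p:
  assumes "edges gexp \<noteq> {}" "0 \<le> p" "p \<le> 1"
  shows "Fid_plus (map_pmf (\<lambda>g. (g, subgraph gexp g)) DG) (\<lambda>g. return_pmf (subgraph gexp g))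
      (Psi_p gexp K p) = p * measure_pmf.prob DG {g. subgraph gexp g}"
proof -
  have "Fid_plus (map_pmf (\<lambda>g. (g, subgraph gexp g)) DG) (\<lambda>g. return_pmf (subgraph gexp g))
      (Psi_p gexp K p) = measure_pmf.expectation DG (\<lambda>g. p * indicator {g. subgraph gexp g} g)"
    unfolding Fid_plus_def integral_map_pmf case_prod_conv
  proof (rule pmf_integral_cong)
    fix g
    show "measure_pmf.expectation (Psi_p gexp K p g) (\<lambda>s. pmf (return_pmf (subgraph gexp g))
        (subgraph gexp g) - pmf (return_pmf (subgraph gexp (graph_minus g s))) (subgraph gexp g))
      = p * indicator {g. subgraph gexp g} g"
    proof (cases "subgraph gexp g")
      case True
      have "graph_minus g empty_graph = g"
        by (simp add: graph_minus_def empty_graph_def edges_def feats_def)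
      thus ?thesis using True assms not_subgraph_graph_minus_self[OF assms(1), of g]
        by (simp add: Psi_p_def)
    qed (simp add: Psi_p_def, subst pmf_integral_cong[where g="\<lambda>_. 0"],
        auto simp: indicator_def dest: subgraph_graph_minusD)
  qed
  thus ?thesis by simp
qed

lemma Fid_minus_Psi_p:
  assumes "edges gexp \<noteq> {}" "0 \<le> p" "p \<le> 1"
    and K: "\<And>g s. g \<in> set_pmf DG \<Longrightarrow> \<not> subgraph gexp g \<Longrightarrow> s \<in> set_pmf (K g) \<Longrightarrow> subgraph s g"
  shows "Fid_minus (map_pmf (\<lambda>g. (g, subgraph gexp g)) DG) (\<lambda>g. return_pmf (subgraph gexp g))
      (Psi_p gexp K p) = (1 - p) * measure_pmf.prob DG {g. subgraph gexp g}"
proof -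
  have "Fid_minus (map_pmf (\<lambda>g. (g, subgraph gexp g)) DG) (\<lambda>g. return_pmf (subgraph gexp g))
      (Psi_p gexp K p) = measure_pmf.expectation DG (\<lambda>g. (1 - p) * indicator {g. subgraph gexp g} g)"
    unfolding Fid_minus_def integral_map_pmf case_prod_conv
  proof (rule pmf_integral_cong)
    fix g assume g: "g \<in> set_pmf DG"
    show "measure_pmf.expectation (Psi_p gexp K p g) (\<lambda>s. pmf (return_pmf (subgraph gexp g))
        (subgraph gexp g) - pmf (return_pmf (subgraph gexp s)) (subgraph gexp g))
      = (1 - p) * indicator {g. subgraph gexp g} g"
    proof (cases "subgraph gexp g")
      case True
      thus ?thesis using assms not_subgraph_empty_graph[OF assms(1)] by (simp add: Psi_p_def)
    next
      case False
      have "\<not> subgraph gexp s" if "s \<in> set_pmf (K g)" for s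
        using K[OF g False that] False subgraph_trans by blast
      thus ?thesis
        using False by (simp add: Psi_p_def, subst pmf_integral_cong[where g="\<lambda>_. 0"]) auto
    qed
  qed
  thus ?thesis by simp
qed

lemma Fid_Delta_Psi_p:
  assumes "edges gexp \<noteq> {}" "0 \<le> p" "p \<le> 1"
    and "\<And>g s. g \<in> set_pmf DG \<Longrightarrow> \<not> subgraph gexp g \<Longrightarrow> s \<in> set_pmf (K g) \<Longrightarrow> subgraph s g"
  shows "Fid_Delta (map_pmf (\<lambda>g. (g, subgraph gexp g)) DG) (\<lambda>g. return_pmf (subgraph gexp g))
      (Psi_p gexp K p) = (2 * p - 1) * measure_pmf.prob DG {g. subgraph gexp g}"
  using Fid_plus_Psi_p[OF assms(1-3)] Fid_minus_Psi_p[OF assms]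
  by (simp add: Fid_Delta_def algebra_simps)

lemma cond_MI_expl_Psi_p:
  assumes fin: "finite (set_pmf DG)" and fsub: "\<And>g. g \<in> set_pmf DG \<Longrightarrow> finite {s. subgraph s g}"
    and K: "\<And>g s. g \<in> set_pmf DG \<Longrightarrow> \<not> subgraph gexp g \<Longrightarrow> s \<in> set_pmf (K g) \<Longrightarrow> subgraph s g"
    and p: "0 \<le> p" "p \<le> 1"
  defines "J \<equiv> map_pmf (\<lambda>g. (subgraph gexp g, g)) DG"
  defines "M \<equiv> \<lambda>g'. mutual_info (cond_pmf J {(y, g). subgraph g' g})"
  defines "C \<equiv> measure_pmf.expectation DG
    (\<lambda>g. if subgraph gexp g then 0 else measure_pmf.expectation (K g) M)"
  shows "cond_MI_expl (map_pmf (\<lambda>g. (g, subgraph gexp g)) DG) (\<lambda>g. return_pmf (subgraph gexp g))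
      (Psi_p gexp K p) = (1 - p) * measure_pmf.prob DG {g. subgraph gexp g} * mutual_info J + C"
proof -
  let ?A = "{g. subgraph gexp g}"
  let ?B = "{gexp, empty_graph} \<union> (\<Union>g\<in>set_pmf DG. {s. subgraph s g})"
  have "set_pmf (Psi_p gexp K p g) \<subseteq> ?B" if "g \<in> set_pmf DG" for g
    using K[OF that] that by (auto simp: Psi_p_def)
  hence "cond_MI_expl (map_pmf (\<lambda>g. (g, subgraph gexp g)) DG) (\<lambda>g. return_pmf (subgraph gexp g))
      (Psi_p gexp K p) = measure_pmf.expectation DG (\<lambda>g. measure_pmf.expectation (Psi_p gexp K p g) M)"
    using fin fsub unfolding M_def J_def
    by (subst cond_MI_expl_eq_expectation[where B="?B"]) (auto simp: map_pmf_comp pred_joint_deterministic)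
  also have "\<dots> = measure_pmf.expectation DG (\<lambda>g.
      (p * M gexp + (1 - p) * M empty_graph) * indicator ?A g + (if subgraph gexp g then 0
        else measure_pmf.expectation (K g) M))"
    by (rule pmf_integral_cong) (use p in \<open>auto simp: Psi_p_def\<close>)
  also have "\<dots> = measure_pmf.prob DG ?A * (p * M gexp + (1 - p) * M empty_graph) + C"
    unfolding C_def
    by (subst Bochner_Integration.integral_add[OF integrable_measure_pmf_finite[OF fin]
        integrable_measure_pmf_finite[OF fin]]) (simp add: mult.commute)
  also have "\<dots> = (1 - p) * measure_pmf.prob DG ?A * mutual_info J + C"
  proof -
    have everything: "{(y, g). subgraph empty_graph g} = UNIV" by auto
    have "M empty_graph = mutual_info J" unfolding M_def everything cond_pmf_UNIV ..
    moreover have "measure_pmf.prob DG ?A * M gexp = 0"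
      unfolding M_def J_def by (rule prob_mult_mutual_info_cond_label_true)
    ultimately show ?thesis by (simp add: algebra_simps)
  qed
  finally show ?thesis .
qed

lemma prob_subgraph_less_one:
  assumes "set_pmf DG = graphs_on n d Z" "edges gexp \<noteq> {}"
  shows "measure_pmf.prob DG {g. subgraph gexp g} < 1"
proof -
  obtain g where "g \<in> set_pmf DG" using set_pmf_not_empty[of DG] by blast
  hence edgeless: "({}, feats g) \<in> set_pmf DG" using assms(1) edgeless_in_graphs_on by blast
  have "\<not> subgraph gexp ({}, feats g)" using assms(2) by (simp add: subgraph_def edges_def)
  hence "pmf DG ({}, feats g) \<le> measure_pmf.prob DG (UNIV - {g. subgraph gexp g})"
    unfolding measure_pmf_single[symmetric] by (intro measure_pmf.finite_measure_mono) auto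
  moreover have "pmf DG ({}, feats g) > 0" using edgeless by (simp add: pmf_positive)
  ultimately show ?thesis using measure_pmf.prob_compl[of "{g. subgraph gexp g}" DG] by simp
qed

lemma affine_le_iff_reverse_affine_le:
  fixes q m C p1 p2 :: real
  assumes "0 \<le> q" "0 < q \<Longrightarrow> 0 < m"
  shows "(1 - p1) * q * m + C \<le> (1 - p2) * q * m + C \<longleftrightarrow> (2 * p2 - 1) * q \<le> (2 * p1 - 1) * q"
proof (cases "q = 0")
  case False
  hence "q > 0" "q * m > 0" using assms by auto
  have "(1 - p1) * q * m + C \<le> (1 - p2) * q * m + C \<longleftrightarrow> p2 * (q * m) \<le> p1 * (q * m)"
    by (simp add: left_diff_distrib mult.assoc)
  also have "\<dots> \<longleftrightarrow> p2 \<le> p1" using \<open>q * m > 0\<close> by (rule mult_le_cancel_right_pos)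
  also have "\<dots> \<longleftrightarrow> (2 * p2 - 1) * q \<le> (2 * p1 - 1) * q" using \<open>q > 0\<close> by simp
  finally show ?thesis .
qed simp

theorem proposition3:
  fixes n d :: nat and Z :: "'z set" and DG :: "'z graph pmf" and gexp :: "'z graph"
    and K :: "'z graph \<Rightarrow> 'z graph pmf"
  assumes "finite Z"
    and "set_pmf DG = graphs_on n d Z"
    and "prob_space.indep_vars (measure_pmf DG) (\<lambda>_. count_space UNIV) (\<lambda>e g. e \<in> edges g) (pot_edges n)"
    and "edges gexp \<noteq> {}"
    and "\<forall>g\<in>set_pmf DG. \<not> subgraph gexp g \<longrightarrow> (\<forall>s\<in>set_pmf (K g). subgraph s g)"
  shows "well_behaved (Fid_Delta (map_pmf (\<lambda>g. (g, subgraph gexp g)) DG))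
           (map_pmf (\<lambda>g. (g, subgraph gexp g)) DG)
           {\<lambda>g. return_pmf (subgraph gexp g)}
           {Psi_p gexp K p | p. p \<in> {0..1}}"
proof -
  define q where "q = measure_pmf.prob DG {g. subgraph gexp g}"
  define J where "J = map_pmf (\<lambda>g. (subgraph gexp g, g)) DG"
  have fin: "finite (set_pmf DG)" using assms(1,2) finite_graphs_on by metis
  have fsub: "\<And>g. g \<in> set_pmf DG \<Longrightarrow> finite {s. subgraph s g}"
    using assms(2) finite_subgraphs_graphs_on by blast
  have K: "\<And>g s. g \<in> set_pmf DG \<Longrightarrow> \<not> subgraph gexp g \<Longrightarrow> s \<in> set_pmf (K g) \<Longrightarrow> subgraph s g"
    using assms(5) by blast
  obtain C where MI: "\<And>p. p \<in> {0..1} \<Longrightarrow> cond_MI_expl (map_pmf (\<lambda>g. (g, subgraph gexp g)) DG)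
      (\<lambda>g. return_pmf (subgraph gexp g)) (Psi_p gexp K p) = (1 - p) * q * mutual_info J + C"
    using cond_MI_expl_Psi_p[OF fin fsub K] unfolding q_def J_def by fastforce
  have "q < 1" unfolding q_def by (rule prob_subgraph_less_one[OF assms(2,4)])
  hence "0 < q \<Longrightarrow> 0 < mutual_info J"
    using mutual_info_bool_label_pos[OF fin] unfolding q_def J_def by blast
  hence "(1 - p1) * q * mutual_info J + C \<le> (1 - p2) * q * mutual_info J + C \<longleftrightarrow>
      (2 * p2 - 1) * q \<le> (2 * p1 - 1) * q" for p1 p2
    by (intro affine_le_iff_reverse_affine_le) (simp_all add: q_def)
  thus ?thesis
    using MI Fid_Delta_Psi_p[OF assms(4) _ _ K] unfolding well_behaved_def q_def by auto
qed

end
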